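(* Let $h_1,h_2:(0,\infty)\to\mathbb{R}$ be convex. Then (i) $\partial X(h_1,h_2)\setminus C(h_1,h_2)\subseteq\operatorname{supp}(h_2)$, and (ii) $\partial X(h_2,h_1)\setminus C(h_1,h_2)\subseteq\operatorname{supp}(h_1)$.
   Context: Boundaries are taken in the space $(0,\infty)$. $X(h_1,h_2):=\{x>0:h_1(x)<h_2(x)\}$. $\operatorname{supp}(h):=\{x>0:\text{for every open }U\ni x,\ h|_U\text{ is not affine}\}$. $C(h_1,h_2)$ is the set of simple crossing points: those $x>0$ for which there is $r>1$ with either $(xr^{-1},x)\subseteq X(h_1,h_2)$ and $(x,xr)\subseteq X(h_2,h_1)$, or $(xr^{-1},x)\subseteq X(h_2,h_1)$ and $(x,xr)\subseteq X(h_1,h_2)$. *)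

theory Defs
  imports "HOL-Analysis.Analysis"
begin

definition Xset :: "(real \<Rightarrow> real) \<Rightarrow> (real \<Rightarrow> real) \<Rightarrow> real set" where
  "Xset h1 h2 = {x. x > 0 \<and> h1 x < h2 x}"

definition affine_on_pos :: "(real \<Rightarrow> real) \<Rightarrow> real set \<Rightarrow> bool" where
  "affine_on_pos h U = (\<exists>a b. \<forall>y\<in>U \<inter> {0<..}. h y = a * y + b)"

text \<open>Neighbourhoods are open sets of the space (0,inf), i.e. U \<inter> (0,inf) for U open in R.\<close>
definition supp :: "(real \<Rightarrow> real) \<Rightarrow> real set" where
  "supp h = {x. x > 0 \<and> (\<forall>U. open U \<and> x \<in> U \<longrightarrow> \<not> affine_on_pos h U)}"

definition Cset :: "(real \<Rightarrow> real) \<Rightarrow> (real \<Rightarrow> real) \<Rightarrow> real set" where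
  "Cset h1 h2 = {x. x > 0 \<and> (\<exists>r>1.
      ({x / r<..<x} \<subseteq> Xset h1 h2 \<and> {x<..<x * r} \<subseteq> Xset h2 h1) \<or>
      ({x / r<..<x} \<subseteq> Xset h2 h1 \<and> {x<..<x * r} \<subseteq> Xset h1 h2))}"

definition bdry :: "real set \<Rightarrow> real set" where
  "bdry S = (top_of_set {0<..}) frontier_of S"

end

theory Submission
  imports Defs
begin

(*
  Let x be a boundary point of X(f,h), with f convex, at which h is affine, say h = l near x.
  Near x, X(f,h) and X(h,f) are the sets where the convex function k = f - l is negative,
  resp. positive. Since k is continuous and x is a boundary point, k x = 0, and there are
  points y arbitrarily close to x with k y < 0. By convexity k < 0 strictly between y and x
  and k > 0 beyond x on the other side, so x is a simple crossing point.
*)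

lemma bdry_eq_frontier: "bdry S = {0<..} \<inter> frontier S"
  unfolding bdry_def by (simp add: frontier_of_subtopology_open)

lemma frequently_nhds_of_closure:
  assumes "x \<in> closure S"
  shows "\<exists>\<^sub>F y in nhds x. y \<in> S"
  using assms open_Int_closure_eq_empty unfolding frequently_def eventually_nhds by blast

lemma bdry_frequently:
  assumes "x \<in> bdry S"
  shows "0 < x" "\<exists>\<^sub>F y in nhds x. y \<in> S" "\<exists>\<^sub>F y in nhds x. 0 < y \<and> y \<notin> S"
proof -
  have x: "0 < x" "x \<in> closure S" "x \<in> closure (- S)"
    using assms by (auto simp: bdry_eq_frontier frontier_def closure_complement)
  have "\<forall>\<^sub>F y in nhds x. 0 < y"
    using eventually_nhds_in_open[of "{0<..}" x] \<open>0 < x\<close> by simp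
  with frequently_nhds_of_closure[OF x(3)] have "\<exists>\<^sub>F y in nhds x. y \<in> - S \<and> 0 < y"
    by (rule frequently_eventually_frequently)
  then show "\<exists>\<^sub>F y in nhds x. 0 < y \<and> y \<notin> S"
    by (rule frequently_elim1) auto
  show "0 < x" "\<exists>\<^sub>F y in nhds x. y \<in> S"
    using x frequently_nhds_of_closure by auto
qed

lemma isCont_eq_zero_if_frequently_signs:
  fixes k :: "'a::t2_space \<Rightarrow> real"
  assumes "isCont k x" "\<exists>\<^sub>F y in nhds x. k y < 0" "\<exists>\<^sub>F y in nhds x. k y \<ge> 0"
  shows "k x = 0"
proof -
  have lim: "(k \<longlongrightarrow> k x) (nhds x)"
    using assms(1) by (simp add: isCont_def tendsto_at_iff_tendsto_nhds)
  have "\<not> k x < 0"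
  proof
    assume "k x < 0"
    then have "\<forall>\<^sub>F y in nhds x. \<not> k y \<ge> 0"
      using order_tendstoD(2)[OF lim] by (simp add: not_le)
    with assms(3) show False by (simp add: frequently_def)
  qed
  moreover have "\<not> k x > 0"
  proof
    assume "k x > 0"
    then have "\<forall>\<^sub>F y in nhds x. \<not> k y < 0"
      using order_tendstoD(1)[OF lim \<open>k x > 0\<close>] by (auto elim: eventually_mono)
    with assms(2) show False by (simp add: frequently_def)
  qed
  ultimately show ?thesis by simp
qed

lemma convex_on_neg_open_segment:
  fixes k :: "'a::real_vector \<Rightarrow> real"
  assumes "convex_on S k" "x \<in> S" "y \<in> S" "k x \<le> 0" "k y < 0" "z \<in> open_segment y x"
  shows "k z < 0"
proof -
  obtain u where u: "0 < u" "u < 1" "z = (1 - u) *\<^sub>R y + u *\<^sub>R x"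
    using assms(6) by (auto simp: in_segment)
  have "k z \<le> (1 - u) * k y + u * k x"
    using convex_onD[OF assms(1), of u y x] u assms(2,3) by simp
  also have "\<dots> < 0"
    using u assms(4,5) mult_pos_neg[of "1 - u" "k y"] mult_nonneg_nonpos[of u "k x"] by linarith
  finally show ?thesis .
qed

lemma convex_on_pos_beyond_open_segment:
  fixes k :: "'a::real_vector \<Rightarrow> real"
  assumes "convex_on S k" "y \<in> S" "z \<in> S" "k x \<ge> 0" "k y < 0" "x \<in> open_segment y z"
  shows "k z > 0"
proof -
  obtain u where u: "0 < u" "u < 1" "x = (1 - u) *\<^sub>R y + u *\<^sub>R z"
    using assms(6) by (auto simp: in_segment)
  have "0 \<le> (1 - u) * k y + u * k z"
    using convex_onD[OF assms(1), of u y z] u assms(2,3,4) by simp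
  moreover have "(1 - u) * k y < 0"
    using u assms(5) by (simp add: mult_pos_neg)
  ultimately have "0 < u * k z" by linarith
  with u show ?thesis by (simp add: zero_less_mult_iff)
qed

lemma convex_on_root_in_Cset:
  fixes k :: "real \<Rightarrow> real"
  assumes "convex_on {0<..} k" "0 < x" "0 < y" "k x = 0" "k y < 0"
  shows "x \<in> Cset k (\<lambda>_. 0)"
proof -
  have neg: "z \<in> Xset k (\<lambda>_. 0)" if "z \<in> open_segment y x" for z
  proof -
    have "0 < z" using that assms(2,3) by (auto simp: open_segment_eq_real_ivl split: if_splits)
    with convex_on_neg_open_segment[OF assms(1) _ _ _ assms(5) that] assms(2,3,4)
    show ?thesis by (simp add: Xset_def)
  qed
  have pos: "z \<in> Xset (\<lambda>_. 0) k" if "0 < z" "x \<in> open_segment y z" for z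
    using convex_on_pos_beyond_open_segment[OF assms(1) _ _ _ assms(5) that(2)] that assms(3,4)
    by (simp add: Xset_def)
  have "y \<noteq> x" using assms(4,5) by auto
  then consider "y < x" | "x < y" by linarith
  then show ?thesis
  proof cases
    case 1
    have "{x / (x / y)<..<x} \<subseteq> Xset k (\<lambda>_. 0)"
      using neg 1 assms(3) by (auto simp: open_segment_eq_real_ivl)
    moreover have "{x<..<x * (x / y)} \<subseteq> Xset (\<lambda>_. 0) k"
      using pos 1 assms(2) by (auto simp: open_segment_eq_real_ivl)
    moreover have "1 < x / y" using 1 assms(3) by simp
    ultimately show ?thesis using assms(2) unfolding Cset_def by blast
  next
    case 2
    have "{x / (y / x)<..<x} \<subseteq> Xset (\<lambda>_. 0) k"
    proof
      fix z assume z: "z \<in> {x / (y / x)<..<x}"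
      have "0 < x / (y / x)" using assms(2,3) by simp
      with z 2 show "z \<in> Xset (\<lambda>_. 0) k" by (intro pos) (auto simp: open_segment_eq_real_ivl)
    qed
    moreover have "{x<..<x * (y / x)} \<subseteq> Xset k (\<lambda>_. 0)"
      using neg 2 assms(2) by (auto simp: open_segment_eq_real_ivl)
    moreover have "1 < y / x" using 2 assms(2) by simp
    ultimately show ?thesis using assms(2) unfolding Cset_def by blast
  qed
qed

lemma Cset_eventually_cong:
  assumes "\<forall>\<^sub>F z in nhds x. (z \<in> Xset f h \<longleftrightarrow> z \<in> Xset f' h') \<and> (z \<in> Xset h f \<longleftrightarrow> z \<in> Xset h' f')"
    and "x \<in> Cset f' h'"
  shows "x \<in> Cset f h"
proof -
  obtain d where "d > 0" and d: "\<And>z. dist z x < d \<Longrightarrow>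
      (z \<in> Xset f h \<longleftrightarrow> z \<in> Xset f' h') \<and> (z \<in> Xset h f \<longleftrightarrow> z \<in> Xset h' f')"
    using assms(1) unfolding eventually_nhds_metric by blast
  obtain r where "0 < x" "1 < r" and r:
      "({x / r<..<x} \<subseteq> Xset f' h' \<and> {x<..<x * r} \<subseteq> Xset h' f') \<or>
       ({x / r<..<x} \<subseteq> Xset h' f' \<and> {x<..<x * r} \<subseteq> Xset f' h')"
    using assms(2) unfolding Cset_def by blast
  define s where "s = min r (1 + d / x)"
  have "1 < s" "s \<le> r"
    using \<open>1 < r\<close> \<open>0 < d\<close> \<open>0 < x\<close> by (auto simp: s_def)
  have "x - d < x / (1 + d / x)"
    using \<open>0 < d\<close> \<open>0 < x\<close> by (simp add: field_simps power2_eq_square)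
  also have "\<dots> \<le> x / s"
    using \<open>1 < s\<close> \<open>0 < x\<close> by (intro divide_left_mono) (auto simp: s_def)
  finally have "x - d < x / s" .
  moreover have "x * s \<le> x + d"
    using \<open>0 < x\<close> mult_left_mono[of s "1 + d / x" x] by (simp add: s_def distrib_left)
  ultimately have near: "dist z x < d" if "z \<in> {x / s<..<x} \<union> {x<..<x * s}" for z
    using that by (auto simp: dist_real_def)
  have "x / r \<le> x / s" "x * s \<le> x * r"
    using \<open>1 < s\<close> \<open>s \<le> r\<close> \<open>0 < x\<close> by (auto intro: divide_left_mono)
  then have "{x / s<..<x} \<subseteq> {x / r<..<x}" "{x<..<x * s} \<subseteq> {x<..<x * r}"
    by auto
  with r near d have "({x / s<..<x} \<subseteq> Xset f h \<and> {x<..<x * s} \<subseteq> Xset h f) \<or>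
       ({x / s<..<x} \<subseteq> Xset h f \<and> {x<..<x * s} \<subseteq> Xset f h)"
    by blast
  with \<open>0 < x\<close> \<open>1 < s\<close> show ?thesis
    unfolding Cset_def by blast
qed

lemma eventually_affine_if_not_in_supp:
  assumes "0 < x" "x \<notin> supp h"
  shows "\<exists>a b. \<forall>\<^sub>F z in nhds x. 0 < z \<and> h z = a * z + b"
proof -
  obtain U a b where "open U" "x \<in> U" "\<forall>z \<in> U \<inter> {0<..}. h z = a * z + b"
    using assms unfolding supp_def affine_on_pos_def by blast
  then have "\<forall>\<^sub>F z in nhds x. 0 < z \<and> h z = a * z + b"
    unfolding eventually_nhds using \<open>0 < x\<close> by (intro exI[of _ "U \<inter> {0<..}"]) auto
  then show ?thesis by blast
qed

lemma bdry_Xset_subset_Cset_Un_supp: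
  assumes "convex_on {0<..} f"
  shows "bdry (Xset f h) \<subseteq> Cset f h \<union> supp h"
proof
  fix x assume x: "x \<in> bdry (Xset f h)"
  show "x \<in> Cset f h \<union> supp h"
  proof (cases "x \<in> supp h")
    case False
    note in_X = bdry_frequently(2)[OF x] and out_X = bdry_frequently(3)[OF x]
    have "0 < x" using x by (rule bdry_frequently(1))
    then obtain a b where affine: "\<forall>\<^sub>F z in nhds x. 0 < z \<and> h z = a * z + b"
      using False by (blast dest: eventually_affine_if_not_in_supp)
    define k where "k z = f z - (a * z + b)" for z
    have "convex_on {0<..} k"
      unfolding k_def using assms
      by (intro convex_on_diff) (simp_all add: concave_on_iff algebra_simps flip: distrib_right)
    then have "isCont k x"
      using convex_on_continuous[of "{0<..}" k] \<open>0 < x\<close> by (simp add: continuous_on_eq_continuous_at)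
    have near: "\<forall>\<^sub>F z in nhds x. (z \<in> Xset f h \<longleftrightarrow> z \<in> Xset k (\<lambda>_. 0)) \<and>
        (z \<in> Xset h f \<longleftrightarrow> z \<in> Xset (\<lambda>_. 0) k)"
      using affine by eventually_elim (auto simp: Xset_def k_def)
    have neg: "\<exists>\<^sub>F z in nhds x. 0 < z \<and> k z < 0"
      using frequently_eventually_frequently[OF in_X affine] by (rule frequently_elim1) (auto simp: Xset_def k_def)
    have "\<exists>\<^sub>F z in nhds x. k z \<ge> 0"
      using frequently_eventually_frequently[OF out_X affine] by (rule frequently_elim1) (auto simp: Xset_def k_def)
    moreover have "\<exists>\<^sub>F z in nhds x. k z < 0"
      using neg by (rule frequently_elim1) simp
    ultimately have "k x = 0"
      using \<open>isCont k x\<close> isCont_eq_zero_if_frequently_signs by blast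
    obtain y where "0 < y" "k y < 0"
      using frequently_ex[OF neg] by blast
    have "x \<in> Cset k (\<lambda>_. 0)"
      using \<open>convex_on {0<..} k\<close> \<open>0 < x\<close> \<open>0 < y\<close> \<open>k x = 0\<close> \<open>k y < 0\<close>
      by (rule convex_on_root_in_Cset)
    with near show ?thesis
      by (blast intro: Cset_eventually_cong)
  qed simp
qed

lemma Cset_commute: "Cset h1 h2 = Cset h2 h1"
  unfolding Cset_def by (simp add: disj_commute)

theorem proposition6p4:
  fixes h1 h2 :: "real \<Rightarrow> real"
  assumes "convex_on {0<..} h1" and "convex_on {0<..} h2"
  shows "bdry (Xset h1 h2) - Cset h1 h2 \<subseteq> supp h2 \<and>
         bdry (Xset h2 h1) - Cset h1 h2 \<subseteq> supp h1"
  using bdry_Xset_subset_Cset_Un_supp[OF assms(1), of h2]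
    bdry_Xset_subset_Cset_Un_supp[OF assms(2), of h1]
  by (auto simp: Cset_commute[of h2 h1])

end
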